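(* Let $\Sigma=(\sigma_1,\dots,\sigma_k)$ be a uniformly primitive mixed substitution system on a finite set of prototiles $\mathcal{F}$ in $\mathbb{R}^d$. Then $\mathbb{Y}_{\Sigma,\Omega}=\mathbb{Y}_{\Sigma,w}$ for every $w\in\widetilde\Omega$.
   Context: Tiles are compact sets equal to the closure of their interior; patches are tessellations of bounded sets by tiles with pairwise disjoint interiors, tilings are tessellations of $\mathbb{R}^d$. $\mathcal{F}=\{T_1,\dots,T_n\}$ is a finite set of prototiles, a tile of type $i$ is a translate of $T_i$, and $\mathcal{F}^*$ is the set of patches of translates of prototiles up to translation. A substitution rule with inflation factor $\xi>1$ is a map $\sigma:\mathcal{F}\to\mathcal{F}^*$ with $\operatorname{supp}\sigma(T_i)=\xi T_i$, extended to patches tile by tile ($T_i+t\mapsto\sigma(T_i)+\xi t$); it is primitive if some power of its substitution matrix (entries $a_{ij}=$ number of tiles of type $i$ in $\sigma(T_j)$) is strictly positive. A mixed substitution system is a tuple $\Sigma=(\sigma_1,\dots,\sigma_k)$ of primitive substitution rules on $\mathcal{F}$. Let $\mathcal{A}=\{1,\dots,k\}$, $\Omega=\mathcal{A}^{\mathbb{N}}$, and $w(m)=(w_1,\dots,w_m)$ for $w\in\Omega$. For a finite word $a=(a_1,\dots,a_m)$ define the left action $a.P=\sigma_{a_1}(\sigma_{a_2}(\cdots\sigma_{a_m}(P)\cdots))$ and the right action $P.a=\sigma_{a_m}(\sigma_{a_{m-1}}(\cdots\sigma_{a_1}(P)\cdots))$. $\Sigma$ is uniformly primitive if there is $m_0$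 such that for every $a\in\mathcal{A}^{m_0}$ and every $T\in\mathcal{F}$ the patch $a.T$ contains tiles of all types. For $w\in\Omega$ let $\mathcal{R}_w=\{T.w(m):T\in\mathcal{F},m\in\mathbb{N}\}$, and let $\mathbb{Y}_{\Sigma,w}$ be the set of tilings $\mathcal{T}$ of $\mathbb{R}^d$ such that every finite patch of $\mathcal{T}$ is a translate of a sub-patch of some element of $\mathcal{R}_w$; $\mathbb{Y}_{\Sigma,\Omega}=\bigcup_{w\in\Omega}\mathbb{Y}_{\Sigma,w}$. $\widetilde\Omega\subset\Omega$ is the set of infinite words containing every finite word over $\mathcal{A}$ as a block of consecutive letters. *)

theory Defs
  imports "HOL-Analysis.Analysis"
begin

text \<open>Prototiles are indexed by types 0..<n via F :: nat => 'a set.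
  A (labelled) tile of type i is represented by a pair (i, t), standing for the translate t + F i.
  A mixed substitution system of k rules is given by sigma :: nat => nat => (nat * 'a) set
  (sigma j i is the patch sigma_j(T_i)) and inflation factors xi :: nat => real;
  rule letters are 0..<k.\<close>

definition tile :: "'a::euclidean_space set \<Rightarrow> bool" where
  "tile T \<longleftrightarrow> compact T \<and> closure (interior T) = T"

definition geom :: "(nat \<Rightarrow> 'a::euclidean_space set) \<Rightarrow> nat \<times> 'a \<Rightarrow> 'a set" where
  "geom F x = (\<lambda>y. snd x + y) ` F (fst x)"

definition supp :: "(nat \<Rightarrow> 'a::euclidean_space set) \<Rightarrow> (nat \<times> 'a) set \<Rightarrow> 'a set" where
  "supp F P = \<Union> (geom F ` P)"

definition disjoint_interiors :: "(nat \<Rightarrow> 'a::euclidean_space set) \<Rightarrow> (nat \<times> 'a) set \<Rightarrow> bool" where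
  "disjoint_interiors F P \<longleftrightarrow>
     (\<forall>x\<in>P. \<forall>y\<in>P. x \<noteq> y \<longrightarrow> interior (geom F x) \<inter> interior (geom F y) = {})"

definition is_patch :: "(nat \<Rightarrow> 'a::euclidean_space set) \<Rightarrow> nat \<Rightarrow> (nat \<times> 'a) set \<Rightarrow> bool" where
  "is_patch F n P \<longleftrightarrow> finite P \<and> (\<forall>x\<in>P. fst x < n) \<and> disjoint_interiors F P"

definition is_tiling :: "(nat \<Rightarrow> 'a::euclidean_space set) \<Rightarrow> nat \<Rightarrow> (nat \<times> 'a) set \<Rightarrow> bool" where
  "is_tiling F n \<T> \<longleftrightarrow> (\<forall>x\<in>\<T>. fst x < n) \<and> disjoint_interiors F \<T> \<and> supp F \<T> = UNIV"

definition subst :: "(nat \<Rightarrow> (nat \<times> 'a::euclidean_space) set) \<Rightarrow> real \<Rightarrow> (nat \<times> 'a) set \<Rightarrow> (nat \<times> 'a) set" where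
  "subst s xi P = {(l, xi *\<^sub>R t + u) | i t l u. (i, t) \<in> P \<and> (l, u) \<in> s i}"

definition subst_rule :: "(nat \<Rightarrow> 'a::euclidean_space set) \<Rightarrow> nat \<Rightarrow> (nat \<Rightarrow> (nat \<times> 'a) set) \<Rightarrow> real \<Rightarrow> bool" where
  "subst_rule F n s xi \<longleftrightarrow> xi > 1 \<and>
     (\<forall>i<n. is_patch F n (s i) \<and> supp F (s i) = (\<lambda>x. xi *\<^sub>R x) ` F i)"

definition subst_matrix :: "(nat \<Rightarrow> (nat \<times> 'a) set) \<Rightarrow> nat \<Rightarrow> nat \<Rightarrow> nat" where
  "subst_matrix s i j = card {t. (i, t) \<in> s j}"

fun mpow :: "nat \<Rightarrow> (nat \<Rightarrow> nat \<Rightarrow> nat) \<Rightarrow> nat \<Rightarrow> nat \<Rightarrow> nat \<Rightarrow> nat" where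
  "mpow n M 0 = (\<lambda>i j. if i = j then 1 else 0)"
| "mpow n M (Suc m) = (\<lambda>i j. \<Sum>l<n. mpow n M m i l * M l j)"

definition primitive :: "nat \<Rightarrow> (nat \<Rightarrow> (nat \<times> 'a) set) \<Rightarrow> bool" where
  "primitive n s \<longleftrightarrow> (\<exists>m\<ge>1. \<forall>i<n. \<forall>j<n. mpow n (subst_matrix s) m i j > 0)"

definition mixed_subst_system ::
  "(nat \<Rightarrow> 'a::euclidean_space set) \<Rightarrow> nat \<Rightarrow> nat \<Rightarrow> (nat \<Rightarrow> nat \<Rightarrow> (nat \<times> 'a) set) \<Rightarrow> (nat \<Rightarrow> real) \<Rightarrow> bool" where
  "mixed_subst_system F n k \<sigma> \<xi> \<longleftrightarrow> (\<forall>i<n. tile (F i)) \<and>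
     (\<forall>j<k. subst_rule F n (\<sigma> j) (\<xi> j) \<and> primitive n (\<sigma> j))"

text \<open>Left action a.P = sigma_{a1}(sigma_{a2}(... sigma_{am}(P))).\<close>
definition left_act :: "(nat \<Rightarrow> nat \<Rightarrow> (nat \<times> 'a::euclidean_space) set) \<Rightarrow> (nat \<Rightarrow> real) \<Rightarrow> nat list \<Rightarrow> (nat \<times> 'a) set \<Rightarrow> (nat \<times> 'a) set" where
  "left_act \<sigma> \<xi> a P = foldr (\<lambda>j Q. subst (\<sigma> j) (\<xi> j) Q) a P"

text \<open>Right action P.a = sigma_{am}(... sigma_{a1}(P)).\<close>
definition right_act :: "(nat \<Rightarrow> nat \<Rightarrow> (nat \<times> 'a::euclidean_space) set) \<Rightarrow> (nat \<Rightarrow> real) \<Rightarrow> (nat \<times> 'a) set \<Rightarrow> nat list \<Rightarrow> (nat \<times> 'a) set" where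
  "right_act \<sigma> \<xi> P a = left_act \<sigma> \<xi> (rev a) P"

definition uniformly_primitive ::
  "nat \<Rightarrow> nat \<Rightarrow> (nat \<Rightarrow> nat \<Rightarrow> (nat \<times> 'a::euclidean_space) set) \<Rightarrow> (nat \<Rightarrow> real) \<Rightarrow> bool" where
  "uniformly_primitive n k \<sigma> \<xi> \<longleftrightarrow> (\<exists>m0. \<forall>a. set a \<subseteq> {..<k} \<and> length a = m0 \<longrightarrow>
     (\<forall>i<n. \<forall>j<n. \<exists>t. (j, t) \<in> left_act \<sigma> \<xi> a {(i, 0)}))"

text \<open>Infinite words over the alphabet {0..<k}; w 0 is the first letter.\<close>
definition Omega :: "nat \<Rightarrow> (nat \<Rightarrow> nat) set" where
  "Omega k = {w. \<forall>m. w m < k}"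

definition Omega_tilde :: "nat \<Rightarrow> (nat \<Rightarrow> nat) set" where
  "Omega_tilde k = {w \<in> Omega k. \<forall>a. set a \<subseteq> {..<k} \<longrightarrow> (\<exists>p. \<forall>l<length a. w (p + l) = a ! l)}"

text \<open>w(m) = (w_1, ..., w_m).\<close>
definition prefix_word :: "(nat \<Rightarrow> nat) \<Rightarrow> nat \<Rightarrow> nat list" where
  "prefix_word w m = map w [0..<m]"

definition R_w :: "nat \<Rightarrow> (nat \<Rightarrow> nat \<Rightarrow> (nat \<times> 'a::euclidean_space) set) \<Rightarrow> (nat \<Rightarrow> real) \<Rightarrow> (nat \<Rightarrow> nat) \<Rightarrow> (nat \<times> 'a) set set" where
  "R_w n \<sigma> \<xi> w = {right_act \<sigma> \<xi> {(i, 0)} (prefix_word w m) | i m. i < n}"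

definition translate :: "'a::euclidean_space \<Rightarrow> (nat \<times> 'a) set \<Rightarrow> (nat \<times> 'a) set" where
  "translate v P = (\<lambda>(i, t). (i, t + v)) ` P"

definition Y_w ::
  "(nat \<Rightarrow> 'a::euclidean_space set) \<Rightarrow> nat \<Rightarrow> (nat \<Rightarrow> nat \<Rightarrow> (nat \<times> 'a) set) \<Rightarrow> (nat \<Rightarrow> real) \<Rightarrow> (nat \<Rightarrow> nat) \<Rightarrow> (nat \<times> 'a) set set" where
  "Y_w F n \<sigma> \<xi> w = {\<T>. is_tiling F n \<T> \<and>
     (\<forall>P. finite P \<and> P \<subseteq> \<T> \<longrightarrow> (\<exists>R\<in>R_w n \<sigma> \<xi> w. \<exists>Q v. Q \<subseteq> R \<and> P = translate v Q))}"

definition Y_Omega ::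
  "(nat \<Rightarrow> 'a::euclidean_space set) \<Rightarrow> nat \<Rightarrow> nat \<Rightarrow> (nat \<Rightarrow> nat \<Rightarrow> (nat \<times> 'a) set) \<Rightarrow> (nat \<Rightarrow> real) \<Rightarrow> (nat \<times> 'a) set set" where
  "Y_Omega F n k \<sigma> \<xi> = (\<Union>w\<in>Omega k. Y_w F n \<sigma> \<xi> w)"

end

theory Submission
  imports Defs
begin

text \<open>Let \<open>T\<close> be a tiling admitted by some word \<open>w'\<close>; each finite patch of \<open>T\<close> is, up to
  translation, contained in some \<open>T\<^sub>i.w'(m)\<close>. Since \<open>w\<close> contains every finite word, it contains
  \<open>b w'(m)\<close> at some position \<open>p\<close>, where \<open>b\<close> is any word of the uniform primitivity length \<open>m\<^sub>0\<close>.
  The patch \<open>T\<^sub>i\<^sub>0.w(p)\<close> contains a tile, \<open>b\<close> turns that tile into a patch containing a tile of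
  type \<open>i\<close>, and \<open>w'(m)\<close> turns this tile into a translate of \<open>T\<^sub>i.w'(m)\<close>. Hence
  \<open>T\<^sub>i.w'(m)\<close> embeds into \<open>T\<^sub>i\<^sub>0.w(p + m\<^sub>0 + m)\<close>, and \<open>T\<close> is admitted by \<open>w\<close>.\<close>

lemma translate_translate: "translate a (translate b Q) = translate (b + a) Q"
  unfolding translate_def image_comp by (intro image_cong refl) (auto simp: add.assoc)

lemma translate_mono: "Q \<subseteq> Q' \<Longrightarrow> translate v Q \<subseteq> translate v Q'"
  unfolding translate_def by blast

lemma translate_singleton: "{(l, s)} = translate s {(l, 0)}"
  by (simp add: translate_def)

lemma translate_UN: "translate v (\<Union>x\<in>I. A x) = (\<Union>x\<in>I. translate v (A x))"
  by (simp add: translate_def image_UN)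

lemma subst_mono: "P \<subseteq> P' \<Longrightarrow> subst s xi P \<subseteq> subst s xi P'"
  unfolding subst_def by blast

lemma subst_eq_UN: "subst s xi P = (\<Union>(i, t)\<in>P. translate (xi *\<^sub>R t) (s i))"
  unfolding subst_def translate_def by (auto simp: add.commute)

lemma subst_translate: "subst s xi (translate v P) = translate (xi *\<^sub>R v) (subst s xi P)"
proof -
  have "subst s xi (translate v P) = (\<Union>(i, t)\<in>P. translate (xi *\<^sub>R (t + v)) (s i))"
    by (simp add: subst_eq_UN translate_def image_UN case_prod_unfold)
  also have "\<dots> = (\<Union>(i, t)\<in>P. translate (xi *\<^sub>R v) (translate (xi *\<^sub>R t) (s i)))"
    by (simp add: translate_translate scaleR_add_right)
  finally show ?thesis
    by (simp add: subst_eq_UN translate_UN case_prod_unfold)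
qed

lemma right_act_Nil [simp]: "right_act \<sigma> \<xi> P [] = P"
  by (simp add: right_act_def left_act_def)

lemma right_act_append: "right_act \<sigma> \<xi> P (a @ b) = right_act \<sigma> \<xi> (right_act \<sigma> \<xi> P a) b"
  by (simp add: right_act_def left_act_def)

lemma right_act_snoc: "right_act \<sigma> \<xi> P (a @ [j]) = subst (\<sigma> j) (\<xi> j) (right_act \<sigma> \<xi> P a)"
  by (simp add: right_act_def left_act_def)

lemma right_act_mono: "P \<subseteq> P' \<Longrightarrow> right_act \<sigma> \<xi> P a \<subseteq> right_act \<sigma> \<xi> P' a"
  by (induction a rule: rev_induct) (simp_all add: right_act_snoc subst_mono)

lemma right_act_translate:
  "right_act \<sigma> \<xi> (translate v P) a = translate (prod_list (map \<xi> a) *\<^sub>R v) (right_act \<sigma> \<xi> P a)"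
  by (induction a rule: rev_induct) (simp_all add: right_act_snoc subst_translate mult.commute)

lemma right_act_tile_subset:
  assumes "(i, t) \<in> P"
  shows "translate (prod_list (map \<xi> a) *\<^sub>R t) (right_act \<sigma> \<xi> {(i, 0)} a) \<subseteq> right_act \<sigma> \<xi> P a"
proof -
  have "right_act \<sigma> \<xi> {(i, t)} a \<subseteq> right_act \<sigma> \<xi> P a"
    using assms by (intro right_act_mono) simp
  then show ?thesis
    by (subst (asm) translate_singleton) (simp add: right_act_translate)
qed

text \<open>The empty set is a tile, and an empty prototile may be substituted by the empty patch;
  only tiles of nonempty type are guaranteed to survive substitution.\<close>

lemma subst_has_nonempty_tile:
  assumes "subst_rule F n s xi" and "(l, t) \<in> P" "l < n" "F l \<noteq> {}"
  shows "\<exists>(l', t')\<in>subst s xi P. l' < n \<and> F l' \<noteq> {}"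
proof -
  have patch: "is_patch F n (s l)" and "supp F (s l) = (\<lambda>x. xi *\<^sub>R x) ` F l"
    using assms unfolding subst_rule_def by auto
  then have "supp F (s l) \<noteq> {}"
    using assms(4) by simp
  then obtain l' u where "(l', u) \<in> s l" "F l' \<noteq> {}"
    unfolding supp_def geom_def by fastforce
  moreover have "l' < n"
    using patch \<open>(l', u) \<in> s l\<close> unfolding is_patch_def by auto
  moreover have "(l', xi *\<^sub>R t + u) \<in> subst s xi P"
    using assms(2) \<open>(l', u) \<in> s l\<close> unfolding subst_def by blast
  ultimately show ?thesis
    by blast
qed

lemma right_act_has_nonempty_tile:
  assumes "mixed_subst_system F n k \<sigma> \<xi>" and "set a \<subseteq> {..<k}"
    and "(l, t) \<in> P" "l < n" "F l \<noteq> {}"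
  shows "\<exists>(l', t')\<in>right_act \<sigma> \<xi> P a. l' < n \<and> F l' \<noteq> {}"
  using assms(2)
proof (induction a rule: rev_induct)
  case Nil
  then show ?case
    using assms(3-5) by auto
next
  case (snoc j a)
  then obtain l' t' where "(l', t') \<in> right_act \<sigma> \<xi> P a" "l' < n" "F l' \<noteq> {}"
    by auto
  moreover have "subst_rule F n (\<sigma> j) (\<xi> j)"
    using assms(1) snoc.prems unfolding mixed_subst_system_def by auto
  ultimately show ?case
    unfolding right_act_snoc using subst_has_nonempty_tile by blast
qed

lemma right_act_has_all_types:
  assumes "\<forall>a. set a \<subseteq> {..<k} \<and> length a = m0 \<longrightarrow>
      (\<forall>i<n. \<forall>j<n. \<exists>t. (j, t) \<in> left_act \<sigma> \<xi> a {(i, 0)})"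
    and "set b \<subseteq> {..<k}" "length b = m0"
    and "(l, s) \<in> P" "l < n" "i < n"
  shows "\<exists>t. (i, t) \<in> right_act \<sigma> \<xi> P b"
proof -
  have "set (rev b) \<subseteq> {..<k} \<and> length (rev b) = m0"
    using assms(2,3) by simp
  then obtain t where "(i, t) \<in> right_act \<sigma> \<xi> {(l, 0)} b"
    using assms(1)[rule_format, of "rev b" l i] assms(5,6) unfolding right_act_def by blast
  then show ?thesis
    using right_act_tile_subset[OF assms(4), of \<xi> b \<sigma>] unfolding translate_def by blast
qed

lemma tiling_has_nonempty_prototile:
  assumes "is_tiling F n T"
  shows "\<exists>i<n. F i \<noteq> {}"
proof -
  have "0 \<in> supp F T"
    using assms unfolding is_tiling_def by simp
  then obtain x where "x \<in> T" "F (fst x) \<noteq> {}"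
    unfolding supp_def geom_def by auto
  then show ?thesis
    using assms unfolding is_tiling_def by auto
qed

lemma set_prefix_word: "w \<in> Omega k \<Longrightarrow> set (prefix_word w m) \<subseteq> {..<k}"
  unfolding prefix_word_def Omega_def by auto

lemma prefix_word_add:
  assumes "\<forall>l<length a. w (p + l) = a ! l"
  shows "prefix_word w (p + length a) = prefix_word w p @ a"
proof -
  have "map w [p..<p + length a] = a"
    using assms by (intro nth_equalityI) auto
  moreover have "[0..<p + length a] = [0..<p] @ [p..<p + length a]"
    by (rule upt_add_eq_append) simp
  ultimately show ?thesis
    unfolding prefix_word_def by simp
qed

lemma Omega_tilde_prefix_word_append:
  assumes "w \<in> Omega_tilde k" and "set a \<subseteq> {..<k}"
  obtains p where "prefix_word w (p + length a) = prefix_word w p @ a"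
  using assms prefix_word_add unfolding Omega_tilde_def by blast

lemma R_w_embeds_into_R_w_Omega_tilde:
  assumes "mixed_subst_system F n k \<sigma> \<xi>" and "uniformly_primitive n k \<sigma> \<xi>"
    and "w \<in> Omega_tilde k" "w' \<in> Omega k"
    and "i0 < n" "F i0 \<noteq> {}"
    and "R \<in> R_w n \<sigma> \<xi> w'"
  shows "\<exists>R'\<in>R_w n \<sigma> \<xi> w. \<exists>v. translate v R \<subseteq> R'"
proof -
  obtain i m where "i < n" and R: "R = right_act \<sigma> \<xi> {(i, 0)} (prefix_word w' m)"
    using assms(7) unfolding R_w_def by blast
  obtain m0 where up: "\<forall>a. set a \<subseteq> {..<k} \<and> length a = m0 \<longrightarrow>
      (\<forall>i<n. \<forall>j<n. \<exists>t. (j, t) \<in> left_act \<sigma> \<xi> a {(i, 0)})"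
    using assms(2) unfolding uniformly_primitive_def by blast
  have wO: "w \<in> Omega k"
    using assms(3) unfolding Omega_tilde_def by simp
  define b where "b = prefix_word w m0"
  define u where "u = prefix_word w' m"
  have b: "set b \<subseteq> {..<k}" "length b = m0" and u: "set u \<subseteq> {..<k}"
    using set_prefix_word wO assms(4) unfolding b_def u_def prefix_word_def by auto
  obtain p where p: "prefix_word w (p + length (b @ u)) = prefix_word w p @ b @ u"
    using Omega_tilde_prefix_word_append[OF assms(3), of "b @ u"] b u by auto
  define X where "X = right_act \<sigma> \<xi> {(i0, 0)} (prefix_word w p)"
  obtain l s where "(l, s) \<in> X" "l < n"
    using right_act_has_nonempty_tile[OF assms(1) set_prefix_word[OF wO], of i0 0 "{(i0, 0)}" p]
      assms(5,6) unfolding X_def by auto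
  then obtain t where "(i, t) \<in> right_act \<sigma> \<xi> X b"
    using right_act_has_all_types[OF up b] \<open>i < n\<close> by blast
  then have "translate (prod_list (map \<xi> u) *\<^sub>R t) R \<subseteq> right_act \<sigma> \<xi> (right_act \<sigma> \<xi> X b) u"
    unfolding R u_def by (rule right_act_tile_subset)
  also have "\<dots> = right_act \<sigma> \<xi> {(i0, 0)} (prefix_word w (p + length (b @ u)))"
    unfolding p X_def right_act_append ..
  finally show ?thesis
    using assms(5) unfolding R_w_def by blast
qed

lemma Y_w_subsetI:
  assumes "\<And>R. R \<in> R_w n \<sigma> \<xi> w' \<Longrightarrow> \<exists>R'\<in>R_w n \<sigma> \<xi> w. \<exists>v. translate v R \<subseteq> R'"
  shows "Y_w F n \<sigma> \<xi> w' \<subseteq> Y_w F n \<sigma> \<xi> w"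
proof
  fix T assume "T \<in> Y_w F n \<sigma> \<xi> w'"
  then have tiling: "is_tiling F n T" and admitted:
    "\<forall>P. finite P \<and> P \<subseteq> T \<longrightarrow> (\<exists>R\<in>R_w n \<sigma> \<xi> w'. \<exists>Q v. Q \<subseteq> R \<and> P = translate v Q)"
    unfolding Y_w_def by simp_all
  have "\<exists>R'\<in>R_w n \<sigma> \<xi> w. \<exists>Q' v'. Q' \<subseteq> R' \<and> P = translate v' Q'" if P: "finite P \<and> P \<subseteq> T" for P
  proof -
    obtain R Q v where R: "R \<in> R_w n \<sigma> \<xi> w'" and "Q \<subseteq> R" "P = translate v Q"
      using admitted[rule_format, OF P] by blast
    obtain R' u where "R' \<in> R_w n \<sigma> \<xi> w" "translate u R \<subseteq> R'"
      using assms[OF R] by blast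
    moreover have "translate u Q \<subseteq> translate u R"
      using \<open>Q \<subseteq> R\<close> by (rule translate_mono)
    moreover have "P = translate (v - u) (translate u Q)"
      using \<open>P = translate v Q\<close> by (simp add: translate_translate)
    ultimately show ?thesis
      by blast
  qed
  with tiling show "T \<in> Y_w F n \<sigma> \<xi> w"
    unfolding Y_w_def by simp
qed

theorem lemma6p1:
  fixes F :: "nat \<Rightarrow> 'a::euclidean_space set"
    and n k :: nat
    and \<sigma> :: "nat \<Rightarrow> nat \<Rightarrow> (nat \<times> 'a) set"
    and \<xi> :: "nat \<Rightarrow> real"
    and w :: "nat \<Rightarrow> nat"
  assumes "mixed_subst_system F n k \<sigma> \<xi>"
    and "uniformly_primitive n k \<sigma> \<xi>"
    and "w \<in> Omega_tilde k"
  shows "Y_Omega F n k \<sigma> \<xi> = Y_w F n \<sigma> \<xi> w"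
proof
  show "Y_w F n \<sigma> \<xi> w \<subseteq> Y_Omega F n k \<sigma> \<xi>"
    using assms(3) unfolding Y_Omega_def Omega_tilde_def by blast
  show "Y_Omega F n k \<sigma> \<xi> \<subseteq> Y_w F n \<sigma> \<xi> w"
  proof
    fix T assume "T \<in> Y_Omega F n k \<sigma> \<xi>"
    then obtain w' where "w' \<in> Omega k" and T: "T \<in> Y_w F n \<sigma> \<xi> w'"
      unfolding Y_Omega_def by blast
    then have "is_tiling F n T"
      unfolding Y_w_def by simp
    then obtain i0 where "i0 < n" "F i0 \<noteq> {}"
      using tiling_has_nonempty_prototile by blast
    then have "Y_w F n \<sigma> \<xi> w' \<subseteq> Y_w F n \<sigma> \<xi> w"
      by (intro Y_w_subsetI R_w_embeds_into_R_w_Omega_tilde[OF assms \<open>w' \<in> Omega k\<close>])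
    then show "T \<in> Y_w F n \<sigma> \<xi> w"
      using T by blast
  qed
qed

end
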